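(* Let $G=(V,E)$ be a finite simple graph with $V=\{x_1,\dots,x_r\}$, $E=\{e_1,\dots,e_n\}$, and suppose $(x_1,x_2,x_3,x_4)$ is a path of $G$ with edges $e_1=\{x_1,x_2\}$, $e_2=\{x_2,x_3\}$, $e_3=\{x_3,x_4\}$. Let $s=w_1x_1+w_2x_2+w_3x_3+\cdots+w_rx_r\in\operatorname{Im}(\varphi_G)$ be such that $\Delta^G_s$ is not acyclic. Then $w_2=w_3$.
   Context: $\mathbb{N}[V]$ and $\mathbb{N}[E]$ denote the free commutative monoids on $V$ and on $E$, and $\varphi_G:\mathbb{N}[E]\to\mathbb{N}[V]$ is the monoid homomorphism with $\varphi_G(e_j)=x_{j_1}+x_{j_2}$ for $e_j=\{x_{j_1},x_{j_2}\}$. For $F\subseteq[n]$ put $e_F=\sum_{i\in F}e_i$, and for $s\in\mathbb{N}[V]$ let $\Delta^G_s=\{F\subseteq[n]: s-\varphi_G(e_F)\in\operatorname{Im}(\varphi_G)\}$ (difference computed in $\mathbb{Z}^V$), a simplicial complex on $[n]$. It is acyclic if all its reduced homology groups with coefficients in $\mathbb{K}$ vanish. A path is a walk $(y_0,\dots,y_m)$ (consecutive vertices adjacent) whose interior vertices $y_1,\dots,y_{m-1}$ have degree exactly $2$ in $G$. *)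

theory Defs
  imports Main
begin

definition simple_graph :: "'a set \<Rightarrow> nat \<Rightarrow> (nat \<Rightarrow> 'a set) \<Rightarrow> bool" where
  "simple_graph V n e \<longleftrightarrow> finite V \<and> inj_on e {1..n} \<and>
     (\<forall>j\<in>{1..n}. e j \<subseteq> V \<and> card (e j) = 2)"

definition adjacent :: "nat \<Rightarrow> (nat \<Rightarrow> 'a set) \<Rightarrow> 'a \<Rightarrow> 'a \<Rightarrow> bool" where
  "adjacent n e v w \<longleftrightarrow> (\<exists>j\<in>{1..n}. e j = {v, w})"

definition degree :: "nat \<Rightarrow> (nat \<Rightarrow> 'a set) \<Rightarrow> 'a \<Rightarrow> nat" where
  "degree n e v = card {j \<in> {1..n}. v \<in> e j}"

definition is_path :: "'a set \<Rightarrow> nat \<Rightarrow> (nat \<Rightarrow> 'a set) \<Rightarrow> 'a list \<Rightarrow> bool" where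
  "is_path V n e ys \<longleftrightarrow> ys \<noteq> [] \<and> set ys \<subseteq> V \<and>
     (\<forall>i. Suc i < length ys \<longrightarrow> adjacent n e (ys ! i) (ys ! Suc i)) \<and>
     (\<forall>i. 0 < i \<and> Suc i < length ys \<longrightarrow> degree n e (ys ! i) = 2)"

text \<open>phi_G applied to the edge vector a (a j = coefficient of e j), as element of Z^V.\<close>
definition phiG :: "nat \<Rightarrow> (nat \<Rightarrow> 'a set) \<Rightarrow> (nat \<Rightarrow> nat) \<Rightarrow> 'a \<Rightarrow> int" where
  "phiG n e a v = (\<Sum>j\<in>{1..n}. if v \<in> e j then int (a j) else 0)"

definition in_image_phiG :: "'a set \<Rightarrow> nat \<Rightarrow> (nat \<Rightarrow> 'a set) \<Rightarrow> ('a \<Rightarrow> int) \<Rightarrow> bool" where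
  "in_image_phiG V n e t \<longleftrightarrow> (\<exists>a. \<forall>v\<in>V. t v = phiG n e a v)"

definition DeltaG :: "'a set \<Rightarrow> nat \<Rightarrow> (nat \<Rightarrow> 'a set) \<Rightarrow> ('a \<Rightarrow> nat) \<Rightarrow> nat set set" where
  "DeltaG V n e s = {F. F \<subseteq> {1..n} \<and>
     in_image_phiG V n e (\<lambda>v. int (s v) - phiG n e (\<lambda>j. if j \<in> F then 1 else 0) v)}"

text \<open>Simplicial reduced homology over a field 'k, via the augmented chain complex.
  A (k-1)-chain is a function on faces, supported on faces of cardinality k
  (k = 0: the empty face, giving the augmentation).\<close>
definition chains :: "'k::field itself \<Rightarrow> nat set set \<Rightarrow> nat \<Rightarrow> (nat set \<Rightarrow> 'k) set" where
  "chains _ D k = {c. \<forall>F. c F \<noteq> 0 \<longrightarrow> F \<in> D \<and> card F = k}"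

text \<open>Simplicial boundary: coefficient of face G in sum_F c(F) * boundary(F), with
  boundary(F) = sum_{j \<in> F} (-1)^(position of j in F) (F - {j}).\<close>
definition bd :: "nat set set \<Rightarrow> (nat set \<Rightarrow> 'k::field) \<Rightarrow> nat set \<Rightarrow> 'k" where
  "bd D c G = (if G \<in> D then
     (\<Sum>j\<in>{j \<in> \<Union>D. j \<notin> G \<and> insert j G \<in> D}.
        (-1) ^ card {i \<in> G. i < j} * c (insert j G)) else 0)"

definition acyclic_over :: "'k::field itself \<Rightarrow> nat set set \<Rightarrow> bool" where
  "acyclic_over K D \<longleftrightarrow>
     (\<forall>k. \<forall>c\<in>chains K D k. bd D c = (\<lambda>_. 0) \<longrightarrow>
        (\<exists>d\<in>chains K D (Suc k). bd D d = c))"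

end

(*
  If s(x2) > s(x3), then every face F of Delta_s can be enlarged by the edge e1. Indeed,
  write s - phi(e_F) = phi(b); if 1 is not in F, the equations at the degree-two vertices
  x2 (edges e1, e2) and x3 (edges e2, e3) read s(x2) = [2 in F] + b1 + b2 and
  s(x3) = [2 in F] + [3 in F] + b2 + b3, so b1 >= s(x2) - s(x3) >= 1, and one copy of e1
  can be moved from b into F. Since Delta_s is a simplicial complex, it is therefore a
  cone with apex 1, and cones are acyclic: coning off a cycle produces a chain whose
  boundary is that cycle. Symmetrically, s(x2) < s(x3) makes Delta_s a cone with apex 3.
*)
theory Submission
  imports Defs
begin

definition extensions :: "nat set set \<Rightarrow> nat set \<Rightarrow> nat set" where
  "extensions D G = {j \<in> \<Union>D. j \<notin> G \<and> insert j G \<in> D}"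

lemma bd_eq_sum_extensions:
  "G \<in> D \<Longrightarrow> bd D c G = (\<Sum>j\<in>extensions D G. (-1) ^ card {i \<in> G. i < j} * c (insert j G))"
  by (simp add: bd_def extensions_def)

lemma finite_extensions: "finite (\<Union>D) \<Longrightarrow> finite (extensions D G)"
  unfolding extensions_def by (rule finite_subset) auto

lemma card_less_insert:
  assumes "finite H" "p \<notin> H"
  shows "card {i \<in> insert p H. i < (j::nat)} = card {i \<in> H. i < j} + (if p < j then 1 else 0)"
proof -
  have "{i \<in> insert p H. i < j} = (if p < j then insert p {i \<in> H. i < j} else {i \<in> H. i < j})"
    by auto
  then show ?thesis using assms by auto
qed

lemma sign_insert_swap:
  assumes "finite H" "p \<notin> H" "j \<notin> H" "j \<noteq> (p::nat)"
  shows "(-1::'k::field) ^ card {i \<in> insert p H. i < j} * (-1) ^ card {i \<in> insert j H. i < p}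
     = - ((-1) ^ card {i \<in> H. i < j} * (-1) ^ card {i \<in> H. i < p})"
  unfolding card_less_insert[OF assms(1,2)] card_less_insert[OF assms(1,3)]
  using assms(4) by (cases "p < j") (auto simp: power_add)

text \<open>The sign is that of the position of p in the ordered face F, that is, of the term
  F - {p} in the boundary of F.\<close>
definition cone_chain :: "nat \<Rightarrow> (nat set \<Rightarrow> 'k::field) \<Rightarrow> nat set \<Rightarrow> 'k" where
  "cone_chain p c F = (if p \<in> F then (-1) ^ card {i \<in> F - {p}. i < p} * c (F - {p}) else 0)"

lemma cone_chain_in_chains:
  assumes fin: "finite (\<Union>D)" and cone: "\<And>G. G \<in> D \<Longrightarrow> insert p G \<in> D"
    and c: "c \<in> chains K D k"
  shows "cone_chain p c \<in> chains K D (Suc k)"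
  unfolding chains_def
proof (intro CollectI allI impI)
  fix F assume "cone_chain p c F \<noteq> 0"
  then have pF: "p \<in> F" and "c (F - {p}) \<noteq> 0" by (auto simp: cone_chain_def split: if_splits)
  then have "F - {p} \<in> D" "card (F - {p}) = k" using c by (auto simp: chains_def)
  moreover have "F = insert p (F - {p})" using pF by auto
  ultimately have "F \<in> D" using cone by metis
  moreover have "finite F" using fin \<open>F \<in> D\<close> by (meson Sup_upper finite_subset)
  ultimately show "F \<in> D \<and> card F = Suc k"
    using pF \<open>card (F - {p}) = k\<close> by (metis card_Suc_Diff1)
qed

lemma bd_cone_chain_apex_free:
  assumes fin: "finite (\<Union>D)" and cone: "insert p G \<in> D" and GD: "G \<in> D" and pG: "p \<notin> G"
  shows "bd D (cone_chain p c) G = c G"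
proof -
  have p: "p \<in> extensions D G" using cone pG by (auto simp: extensions_def)
  have "bd D (cone_chain p c) G = (-1) ^ card {i \<in> G. i < p} * cone_chain p c (insert p G)"
    unfolding bd_eq_sum_extensions[OF GD] sum.remove[OF finite_extensions[OF fin] p]
    using pG by (simp add: sum.neutral cone_chain_def extensions_def)
  also have "\<dots> = c G"
    using pG by (simp add: cone_chain_def flip: mult.assoc power_add)
  finally show ?thesis .
qed

lemma bd_cone_chain_apex:
  fixes c :: "nat set \<Rightarrow> 'k::field"
  assumes fin: "finite (\<Union>D)"
    and down: "\<And>F. F \<in> D \<Longrightarrow> F - {p} \<in> D" and cone: "\<And>F. F \<in> D \<Longrightarrow> insert p F \<in> D"
    and GD: "G \<in> D" and pG: "p \<in> G" and cycle: "bd D c (G - {p}) = 0"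
  shows "bd D (cone_chain p c) G = c G"
proof -
  define H where "H = G - {p}"
  have HD: "H \<in> D" and GH: "G = insert p H" and pH: "p \<notin> H" and finH: "finite H"
    using down[OF GD] pG fin GD by (auto simp: H_def intro: finite_subset)
  have p: "p \<in> extensions D H" using GD GH pH by (auto simp: extensions_def)
  have ext: "extensions D G = extensions D H - {p}"
  proof
    show "extensions D G \<subseteq> extensions D H - {p}"
      using down GH pH by (fastforce simp: extensions_def insert_Diff_if)
    show "extensions D H - {p} \<subseteq> extensions D G"
      using cone GH by (fastforce simp: extensions_def insert_commute)
  qed
  let ?sH = "(-1::'k) ^ card {i \<in> H. i < p}"
  let ?tail = "\<Sum>j\<in>extensions D G. (-1) ^ card {i \<in> H. i < j} * c (insert j H)"
  have tail: "?tail = - (?sH * c G)"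
    using cycle unfolding H_def[symmetric] bd_eq_sum_extensions[OF HD] ext
    by (simp add: sum.remove[OF finite_extensions[OF fin] p] GH eq_neg_iff_add_eq_0 add.commute)
  have "bd D (cone_chain p c) G = (\<Sum>j\<in>extensions D G. - ?sH * ((-1) ^ card {i \<in> H. i < j} * c (insert j H)))"
    unfolding bd_eq_sum_extensions[OF GD]
  proof (rule sum.cong[OF refl])
    fix j assume "j \<in> extensions D G"
    then have jH: "j \<notin> H" "j \<noteq> p" using GH by (auto simp: extensions_def)
    then have "insert j G - {p} = insert j H" using GH pH by auto
    then have "cone_chain p c (insert j G) = (-1) ^ card {i \<in> insert j H. i < p} * c (insert j H)"
      by (simp add: cone_chain_def GH)
    then have "(-1) ^ card {i \<in> G. i < j} * cone_chain p c (insert j G) =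
        ((-1) ^ card {i \<in> insert p H. i < j} * (-1) ^ card {i \<in> insert j H. i < p}) * c (insert j H)"
      unfolding GH by (simp only: mult.assoc)
    also have "\<dots> = - ?sH * ((-1) ^ card {i \<in> H. i < j} * c (insert j H))"
      unfolding sign_insert_swap[OF finH pH jH] by (simp add: algebra_simps)
    finally show "(-1) ^ card {i \<in> G. i < j} * cone_chain p c (insert j G) =
        - ?sH * ((-1) ^ card {i \<in> H. i < j} * c (insert j H))" .
  qed
  also have "\<dots> = - ?sH * ?tail" by (simp add: sum_distrib_left)
  also have "\<dots> = ?sH * ?sH * c G" unfolding tail by (simp add: mult.assoc)
  also have "\<dots> = c G" by (simp flip: power_add)
  finally show ?thesis .
qed

lemma cone_acyclic:
  fixes K :: "'k::field itself"
  assumes fin: "finite (\<Union>D)"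
    and down: "\<And>F. F \<in> D \<Longrightarrow> F - {p} \<in> D" and cone: "\<And>F. F \<in> D \<Longrightarrow> insert p F \<in> D"
  shows "acyclic_over K D"
  unfolding acyclic_over_def
proof (intro allI ballI impI)
  fix k and c :: "nat set \<Rightarrow> 'k" assume c: "c \<in> chains K D k" and cycle: "bd D c = (\<lambda>_. 0)"
  have "bd D (cone_chain p c) G = c G" for G
  proof (cases "G \<in> D")
    case False
    then show ?thesis using c by (auto simp: bd_def chains_def)
  next
    case True
    have "bd D c (G - {p}) = 0" using cycle by simp
    with True show ?thesis
      using bd_cone_chain_apex_free[OF fin cone] bd_cone_chain_apex[OF fin down cone]
      by (cases "p \<in> G") auto
  qed
  then show "\<exists>d\<in>chains K D (Suc k). bd D d = c"
    using cone_chain_in_chains[OF fin cone c] by blast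
qed

lemma phiG_add: "phiG n e (\<lambda>j. f j + g j) v = phiG n e f v + phiG n e g v"
  unfolding phiG_def by (simp flip: sum.distrib) (rule sum.cong, auto)

lemma mem_DeltaG_iff:
  "F \<in> DeltaG V n e s \<longleftrightarrow> F \<subseteq> {1..n} \<and>
     (\<exists>b. \<forall>v\<in>V. int (s v) = phiG n e (\<lambda>j. if j \<in> F then 1 else 0) v + phiG n e b v)"
  by (auto simp: DeltaG_def in_image_phiG_def algebra_simps)

lemma phiG_move_edge:
  assumes "p \<notin> F"
  shows "phiG n e (\<lambda>j. if j \<in> insert p F then 1 else 0) v + phiG n e b v =
    phiG n e (\<lambda>j. if j \<in> F then 1 else 0) v + phiG n e (b(p := Suc (b p))) v"
  using assms by (simp flip: phiG_add) (rule arg_cong[where f = "\<lambda>a. phiG n e a v"], auto)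

lemma DeltaG_remove:
  assumes "F \<in> DeltaG V n e s"
  shows "F - {p} \<in> DeltaG V n e s"
proof (cases "p \<in> F")
  case True
  from assms obtain b where F: "F \<subseteq> {1..n}"
    and b: "\<forall>v\<in>V. int (s v) = phiG n e (\<lambda>j. if j \<in> F then 1 else 0) v + phiG n e b v"
    by (auto simp: mem_DeltaG_iff)
  have "p \<notin> F - {p}" by simp
  from phiG_move_edge[OF this] have move: "phiG n e (\<lambda>j. if j \<in> F then 1 else 0) v + phiG n e b v =
      phiG n e (\<lambda>j. if j \<in> F - {p} then 1 else 0) v + phiG n e (b(p := Suc (b p))) v" for v
    unfolding insert_Diff[OF True] .
  show ?thesis
    using F b unfolding mem_DeltaG_iff move by blast
qed (simp add: assms)

lemma incident_edges_of_degree_two: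
  assumes "degree n e v = 2" "a \<in> {1..n}" "b \<in> {1..n}" "a \<noteq> b" "v \<in> e a" "v \<in> e b"
  shows "{j \<in> {1..n}. v \<in> e j} = {a, b}"
  using assms by (intro card_subset_eq[symmetric]) (auto simp: degree_def)

lemma phiG_at_degree_two:
  assumes "{j \<in> {1..n}. v \<in> e j} = {a, b}" "a \<noteq> b"
  shows "phiG n e c v = int (c a) + int (c b)"
proof -
  have "phiG n e c v = (\<Sum>j\<in>{j \<in> {1..n}. v \<in> e j}. int (c j))"
    unfolding phiG_def by (subst sum.inter_filter) auto
  then show ?thesis using assms by simp
qed

lemma DeltaG_insert_edge_at_heavier_vertex:
  assumes v: "{j \<in> {1..n}. v \<in> e j} = {p, q}" "p \<noteq> q" "v \<in> V"
    and w: "{j \<in> {1..n}. w \<in> e j} = {q, r}" "q \<noteq> r" "w \<in> V"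
    and heavier: "s w < s v" and F: "F \<in> DeltaG V n e s"
  shows "insert p F \<in> DeltaG V n e s"
proof (cases "p \<in> F")
  case False
  from F obtain b where "F \<subseteq> {1..n}"
    and b: "\<forall>v\<in>V. int (s v) = phiG n e (\<lambda>j. if j \<in> F then 1 else 0) v + phiG n e b v"
    by (auto simp: mem_DeltaG_iff)
  have "int (s v) = (if q \<in> F then 1 else 0) + int (b p) + int (b q)"
    using b v False by (simp add: phiG_at_degree_two)
  moreover have "int (s w) = (if q \<in> F then 1 else 0) + (if r \<in> F then 1 else 0) + int (b q) + int (b r)"
    using b w by (simp add: phiG_at_degree_two)
  ultimately have "0 < b p" using heavier by (simp split: if_splits)
  then obtain b0 where b0: "b = b0(p := Suc (b0 p))"
    by (metis Suc_pred fun_upd_same fun_upd_triv fun_upd_upd)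
  have "\<forall>v\<in>V. int (s v) = phiG n e (\<lambda>j. if j \<in> insert p F then 1 else 0) v + phiG n e b0 v"
    using b unfolding b0 phiG_move_edge[OF False, symmetric] .
  moreover have "p \<in> {1..n}" using v by blast
  ultimately show ?thesis using \<open>F \<subseteq> {1..n}\<close> unfolding mem_DeltaG_iff by blast
qed (simp add: F insert_absorb)

lemma DeltaG_acyclic_of_heavier_vertex:
  assumes "{j \<in> {1..n}. v \<in> e j} = {p, q}" "p \<noteq> q" "v \<in> V"
    and "{j \<in> {1..n}. w \<in> e j} = {q, r}" "q \<noteq> r" "w \<in> V"
    and "s w < s v"
  shows "acyclic_over K (DeltaG V n e s)"
proof (rule cone_acyclic[where p = p])
  show "finite (\<Union>(DeltaG V n e s))"
    by (rule finite_subset[of _ "{1..n}"]) (auto simp: DeltaG_def)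
qed (use DeltaG_remove DeltaG_insert_edge_at_heavier_vertex[OF assms] in auto)

theorem lemma3p7:
  fixes V :: "'a set" and n :: nat and e :: "nat \<Rightarrow> 'a set"
    and s :: "'a \<Rightarrow> nat" and x1 x2 x3 x4 :: 'a
  assumes "simple_graph V n e"
    and "3 \<le> n"
    and "distinct [x1, x2, x3, x4]"
    and "is_path V n e [x1, x2, x3, x4]"
    and "e 1 = {x1, x2}" and "e 2 = {x2, x3}" and "e 3 = {x3, x4}"
    and "in_image_phiG V n e (\<lambda>v. int (s v))"
    and "\<not> acyclic_over TYPE('k::field) (DeltaG V n e s)"
  shows "s x2 = s x3"
proof (rule ccontr)
  assume "s x2 \<noteq> s x3"
  have "x2 \<in> V" "x3 \<in> V" "degree n e x2 = 2" "degree n e x3 = 2"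
    using assms(4) unfolding is_path_def by (auto dest: spec[of _ 1] spec[of _ 2])
  then have inc2: "{j \<in> {1..n}. x2 \<in> e j} = {1, 2}"
    and inc3: "{j \<in> {1..n}. x3 \<in> e j} = {2, 3}"
    using assms(2,5-7) by (intro incident_edges_of_degree_two; auto)+
  from \<open>s x2 \<noteq> s x3\<close> consider "s x3 < s x2" | "s x2 < s x3" by linarith
  then have "acyclic_over TYPE('k) (DeltaG V n e s)"
  proof cases
    case 1
    with inc2 inc3 \<open>x2 \<in> V\<close> \<open>x3 \<in> V\<close> show ?thesis
      by (intro DeltaG_acyclic_of_heavier_vertex[where p = 1 and q = 2 and r = 3]) auto
  next
    case 2
    with inc2 inc3 \<open>x2 \<in> V\<close> \<open>x3 \<in> V\<close> show ?thesis
      by (intro DeltaG_acyclic_of_heavier_vertex[where p = 3 and q = 2 and r = 1]) (auto simp: insert_commute)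
  qed
  with assms(9) show False ..
qed

end
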